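(* Let $\bar N_{\rm p}=2^r$ with $r\ge1$ and $N_{\rm p}=\bar N_{\rm p}^2$. Let $\boldsymbol B:=(\boldsymbol H_{\bar N_{\rm p}}\otimes\boldsymbol H_{\bar N_{\rm p}})^*\boldsymbol\Psi_{\rm idhw}\in\mathbb R^{N_{\rm p}\times N_{\rm p}}$. For each $l_{\rm p}=\bar N_{\rm p}(l_{\rm y}-1)+l_{\rm x}$ with $l_{\rm x},l_{\rm y}\in\{1,\dots,\bar N_{\rm p}\}$, define the local coherence $\mu_{l_{\rm p}}:=\max_j|B_{l_{\rm p},j}|$. Then $$\mu_{l_{\rm p}}=\kappa^{\rm p}_{l_{\rm p}}:=\min\{1,2^{-\lfloor\log_2(\max\{l_{\rm x},l_{\rm y}\}-1)\rfloor}\},$$ with the convention $\log_2 0=-\infty$, so that $\kappa^{\rm p}_{l_{\rm p}}=1$ when $l_{\rm x}=l_{\rm y}=1$. Moreover, $$\sum_{l_{\rm p}=1}^{N_{\rm p}}(\kappa^{\rm p}_{l_{\rm p}})^2=1+3\log_2(\bar N_{\rm p}).$$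
   Context: Let $\boldsymbol a=[1,1]^\top$ and $\boldsymbol b=[1,-1]^\top$. Paley-ordered Hadamard matrix: $\boldsymbol H_1=[1]$ and $\boldsymbol H_n=\tfrac1{\sqrt2}[\boldsymbol H_{n/2}\otimes\boldsymbol a,\ \boldsymbol H_{n/2}\otimes\boldsymbol b]$. Haar matrices: $\boldsymbol W_1=[1]$ and $\boldsymbol W_n=\tfrac1{\sqrt2}[\boldsymbol W_{n/2}\otimes\boldsymbol a,\ \boldsymbol I_{n/2}\otimes\boldsymbol b]$. Also $\boldsymbol W^0_1=[1]$ and $\boldsymbol W^0_n=\tfrac1{\sqrt2}[\boldsymbol W^0_{n/2}\otimes\boldsymbol a,\ \boldsymbol I_{n/2}\otimes\boldsymbol a]$. Dyadic levels: $\mathcal T_0=\{1\}$ and $\mathcal T_\ell=\{2^{\ell-1}+1,\dots,2^\ell\}$ for $\ell\ge1$. For an index set $S$, $\boldsymbol A\boldsymbol P_S^\top$ denotes the submatrix of columns of $\boldsymbol A$ indexed by $S$. 2-D isotropic Haar basis: $\boldsymbol\Psi_{\rm idhw}=[\boldsymbol\Psi_0,\boldsymbol\Psi_1,\boldsymbol\Psi_2,\boldsymbol\Psi_3]$, where $\boldsymbol\Psi_0=N_{\rm p}^{-1/2}\boldsymbol 1_{N_{\rm p}}$ and, for $i\in\{1,2,3\}$, $\boldsymbol\Psi_i=[\boldsymbol\Psi_{i,1},\dots,\boldsymbol\Psi_{i,r}]$ with - $\boldsymbol\Psi_{1,\ell}=(\boldsymbol W^0_{\bar N_{\rm p}}\boldsymbol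 P_{\mathcal T_\ell}^\top)\otimes(\boldsymbol W_{\bar N_{\rm p}}\boldsymbol P_{\mathcal T_\ell}^\top)$, - $\boldsymbol\Psi_{2,\ell}=(\boldsymbol W_{\bar N_{\rm p}}\boldsymbol P_{\mathcal T_\ell}^\top)\otimes(\boldsymbol W^0_{\bar N_{\rm p}}\boldsymbol P_{\mathcal T_\ell}^\top)$, - $\boldsymbol\Psi_{3,\ell}=(\boldsymbol W_{\bar N_{\rm p}}\boldsymbol P_{\mathcal T_\ell}^\top)\otimes(\boldsymbol W_{\bar N_{\rm p}}\boldsymbol P_{\mathcal T_\ell}^\top)$. *)

theory Defs
  imports Complex_Main
begin

text \<open>Matrices are represented as functions nat => nat => real with 0-based
  indices; the dimensions are tracked explicitly. Entries outside the stated
  dimensions are irrelevant.\<close>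

type_synonym mat = "nat \<Rightarrow> nat \<Rightarrow> real"

definition kron :: "nat \<Rightarrow> nat \<Rightarrow> mat \<Rightarrow> mat \<Rightarrow> mat" where
  "kron p q A B = (\<lambda>i j. A (i div p) (j div q) * B (i mod p) (j mod q))"

definition hcat :: "nat \<Rightarrow> mat \<Rightarrow> mat \<Rightarrow> mat" where
  "hcat n A B = (\<lambda>i j. if j < n then A i j else B i (j - n))"

definition msmult :: "real \<Rightarrow> mat \<Rightarrow> mat" where
  "msmult c A = (\<lambda>i j. c * A i j)"

definition mtranspose :: "mat \<Rightarrow> mat" where
  "mtranspose A = (\<lambda>i j. A j i)"

definition mmult :: "nat \<Rightarrow> mat \<Rightarrow> mat \<Rightarrow> mat" where
  "mmult n A B = (\<lambda>i j. \<Sum>k<n. A i k * B k j)"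

definition idm :: mat where
  "idm = (\<lambda>i j. if i = j then 1 else 0)"

definition vec_a :: mat where "vec_a = (\<lambda>i j. 1)"
definition vec_b :: mat where "vec_b = (\<lambda>i j. if i = 0 then 1 else -1)"

text \<open>Paley-ordered Hadamard matrix H_{2^r} (size 2^r x 2^r).\<close>
fun hadamard :: "nat \<Rightarrow> mat" where
  "hadamard 0 = (\<lambda>i j. 1)"
| "hadamard (Suc r) = msmult (1 / sqrt 2)
     (hcat (2^r) (kron 2 1 (hadamard r) vec_a) (kron 2 1 (hadamard r) vec_b))"

fun haar :: "nat \<Rightarrow> mat" where
  "haar 0 = (\<lambda>i j. 1)"
| "haar (Suc r) = msmult (1 / sqrt 2)
     (hcat (2^r) (kron 2 1 (haar r) vec_a) (kron 2 1 idm vec_b))"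

fun haar0 :: "nat \<Rightarrow> mat" where
  "haar0 0 = (\<lambda>i j. 1)"
| "haar0 (Suc r) = msmult (1 / sqrt 2)
     (hcat (2^r) (kron 2 1 (haar0 r) vec_a) (kron 2 1 idm vec_a))"

text \<open>A P_{T_l}^T for l >= 1: the columns with 1-based indices 2^(l-1)+1..2^l,
  i.e. 0-based indices 2^(l-1)..2^l-1 (2^(l-1) columns).\<close>
definition dyadic_cols :: "mat \<Rightarrow> nat \<Rightarrow> mat" where
  "dyadic_cols A l = (\<lambda>i j. A i (2^(l-1) + j))"

definition psi_block :: "mat \<Rightarrow> mat \<Rightarrow> nat \<Rightarrow> nat \<Rightarrow> mat" where
  "psi_block U V r l = kron (2^r) (2^(l-1)) (dyadic_cols U l) (dyadic_cols V l)"

text \<open>Number of columns of [Psi_{i,1},...,Psi_{i,L}].\<close>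
definition levels_width :: "nat \<Rightarrow> nat" where
  "levels_width L = (\<Sum>l=1..L. 4^(l-1))"

fun psi_levels :: "mat \<Rightarrow> mat \<Rightarrow> nat \<Rightarrow> nat \<Rightarrow> mat" where
  "psi_levels U V r 0 = (\<lambda>i j. 0)"
| "psi_levels U V r (Suc L) =
     hcat (levels_width L) (psi_levels U V r L) (psi_block U V r (Suc L))"

definition psi_idhw :: "nat \<Rightarrow> mat" where
  "psi_idhw r =
    (let w = levels_width r;
         P0 = (\<lambda>i j. 1 / sqrt (real (4^r)));
         P1 = psi_levels (haar0 r) (haar r) r r;
         P2 = psi_levels (haar r) (haar0 r) r r;
         P3 = psi_levels (haar r) (haar r) r r
     in hcat 1 P0 (hcat w P1 (hcat w P2 P3)))"

text \<open>B = (H (x) H)^* Psi_idhw (real, so ^* is the transpose).\<close>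
definition Bmat :: "nat \<Rightarrow> mat" where
  "Bmat r = mmult (4^r) (mtranspose (kron (2^r) (2^r) (hadamard r) (hadamard r)))
              (psi_idhw r)"

text \<open>Local coherence mu_{lp} = max_j |B_{lp,j}|, lp 1-based.\<close>
definition local_coherence :: "nat \<Rightarrow> nat \<Rightarrow> real" where
  "local_coherence r lp = Max {\<bar>Bmat r (lp - 1) j\<bar> | j. j < 4^r}"

definition kappa_xy :: "nat \<Rightarrow> nat \<Rightarrow> real" where
  "kappa_xy lx ly = (if max lx ly = 1 then 1
      else min 1 (2 powr (- real_of_int \<lfloor>log 2 (real (max lx ly) - 1)\<rfloor>)))"

definition kappa_p :: "nat \<Rightarrow> nat \<Rightarrow> real" where
  "kappa_p Nbar lp = kappa_xy ((lp - 1) mod Nbar + 1) ((lp - 1) div Nbar + 1)"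

end

theory Submission
  imports Defs "HOL-Library.Log_Nat"
begin

text \<open>Both factors of B are Kronecker products, so every entry of B is a product of two entries
  of the one-dimensional matrices H^T W and H^T W^0. One butterfly step of the Paley recursion shows,
  by induction on r, that |(H^T W)(p,q)| is 2^(-(l-1)/2) if p and q lie in the same dyadic level l
  and 0 otherwise, while |(H^T W^0)(p,q)| takes the same value exactly when p lies in a strictly
  lower level than q (or p = q = 0). A column of Psi_idhw pairs two columns of a common level l, at
  least one of them from W, so the entries of the row of B indexed by (lx, ly) are 0 or
  +-2^(1-l), where l is the level of max(lx, ly) - 1, and some column attains this value. Summing
  the squares level by level gives 1 + 3 r.\<close>

lemma sum_lessThan_mult_div_mod:
  fixes f :: "nat \<Rightarrow> nat \<Rightarrow> 'a::comm_monoid_add"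
  shows "(\<Sum>i<n * k. f (i div k) (i mod k)) = (\<Sum>a<n. \<Sum>b<k. f a b)"
proof -
  have "(\<Sum>i\<in>{a*k..<a*k+k}. f (i div k) (i mod k)) = (\<Sum>b<k. f a b)" for a
  proof -
    have "(\<Sum>i\<in>{0+a*k..<k+a*k}. f (i div k) (i mod k))
        = (\<Sum>b\<in>{0..<k}. f ((b + a*k) div k) ((b + a*k) mod k))"
      by (rule sum.shift_bounds_nat_ivl)
    also have "\<dots> = (\<Sum>b<k. f a b)"
      by (rule sum.cong) auto
    finally show ?thesis by (simp add: add.commute)
  qed
  then show ?thesis
    using sum.nat_group[of "\<lambda>i. f (i div k) (i mod k)" k n] by simp
qed

lemma sum_lessThan_double:
  fixes g :: "nat \<Rightarrow> 'a::comm_monoid_add"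
  shows "(\<Sum>i<2 * n. g i) = (\<Sum>k<n. g (2 * k) + g (2 * k + 1))"
proof -
  have "(\<Sum>i<n * 2. g i) = (\<Sum>k<n. \<Sum>e<2. g (k * 2 + e))"
    using sum_lessThan_mult_div_mod[where f = "\<lambda>a b. g (a * 2 + b)" and n = n and k = 2] by simp
  then show ?thesis by (simp add: mult.commute numeral_2_eq_2)
qed

text \<open>The 0-based column index q lies in the dyadic level \<open>T\<^sub>l\<close> of the paper
  (which uses the 1-based index q + 1) exactly for l = level q.\<close>

abbreviation level :: "nat \<Rightarrow> nat" where
  "level q \<equiv> floorlog 2 q"

lemma level_0 [simp]: "level 0 = 0"
  by (simp add: floorlog_def)

lemma level_le_iff: "level q \<le> r \<longleftrightarrow> q < 2^r"
  by (simp add: floorlog_le_iff)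

lemma level_eq_Suc: "2^r \<le> q \<Longrightarrow> q < 2^Suc r \<Longrightarrow> level q = Suc r"
  using floorlog_leI[of q 2 "Suc r"] floorlog_ge_SucI[of 2 r q] by auto

lemma level_pos_iff: "0 < level q \<longleftrightarrow> 0 < q"
  by (simp add: floorlog_def)

lemma level_bounds: "0 < q \<Longrightarrow> 2^(level q - 1) \<le> q \<and> q < 2^level q"
  using floorlog_bounds[of q 2] by simp

lemma level_max: "level (max a b) = max (level a) (level b)"
  by (simp add: max_def floorlog_mono le_antisym)

lemma floor_log2_eq_level: "0 < q \<Longrightarrow> \<lfloor>log 2 (real q)\<rfloor> = int (level q - 1)"
  by (simp add: floorlog_def)

lemma inv_sqrt2_power_square: "(1 / sqrt 2) ^ k * (1 / sqrt 2) ^ k = (1 / 2 :: real) ^ k"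
  by (simp flip: power_mult_distrib)

lemma hadamard_Suc:
  "hadamard (Suc r) i j = (1 / sqrt 2) *
     (if j < 2^r then hadamard r (i div 2) j
      else hadamard r (i div 2) (j - 2^r) * (if i mod 2 = 0 then 1 else -1))"
  by (simp add: msmult_def hcat_def kron_def vec_a_def vec_b_def)

lemma haar_Suc:
  "haar (Suc r) i j = (1 / sqrt 2) *
     (if j < 2^r then haar r (i div 2) j
      else (if i div 2 = j - 2^r then 1 else 0) * (if i mod 2 = 0 then 1 else -1))"
  by (simp add: msmult_def hcat_def kron_def vec_a_def vec_b_def idm_def)

lemma haar0_Suc:
  "haar0 (Suc r) i j = (1 / sqrt 2) *
     (if j < 2^r then haar0 r (i div 2) j else if i div 2 = j - 2^r then 1 else 0)"
  by (simp add: msmult_def hcat_def kron_def vec_a_def idm_def)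

declare hadamard.simps(2) [simp del] haar.simps(2) [simp del] haar0.simps(2) [simp del]

lemma abs_hadamard: "\<bar>hadamard r i j\<bar> = (1 / sqrt 2) ^ r"
  by (induction r arbitrary: i j) (simp_all add: hadamard_Suc abs_mult)

lemma haar_first_column: "haar r k 0 = (1 / sqrt 2) ^ r"
  by (induction r arbitrary: k) (simp_all add: haar_Suc)

subsection \<open>The matrices \<open>H\<^sup>T W\<close> and \<open>H\<^sup>T W\<^sup>0\<close>\<close>

definition hadamard_transform :: "nat \<Rightarrow> mat \<Rightarrow> mat" where
  "hadamard_transform r X = mmult (2^r) (mtranspose (hadamard r)) X"

lemma hadamard_transform_eq:
  "hadamard_transform r X p q = (\<Sum>k<2^r. hadamard r k p * X k q)"
  by (simp add: hadamard_transform_def mmult_def mtranspose_def)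

lemma div_mod_2_double:
  "(2 * k) div 2 = k" "(2 * k + 1) div 2 = k" "(2 * k) mod 2 = (0::nat)" "(2 * k + 1) mod 2 = (1::nat)"
  by auto

lemma sum_hadamard_Suc:
  "(\<Sum>k<2^Suc r. hadamard (Suc r) k p * f k) =
     (if p < 2^r then (\<Sum>k<2^r. hadamard r k p * ((f (2*k) + f (2*k+1)) / sqrt 2))
      else (\<Sum>k<2^r. hadamard r k (p - 2^r) * ((f (2*k) - f (2*k+1)) / sqrt 2)))"
proof -
  have "hadamard (Suc r) (2*k) p * f (2*k) + hadamard (Suc r) (2*k+1) p * f (2*k+1) =
     (if p < 2^r then hadamard r k p * ((f (2*k) + f (2*k+1)) / sqrt 2)
      else hadamard r k (p - 2^r) * ((f (2*k) - f (2*k+1)) / sqrt 2))" for k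
    unfolding hadamard_Suc div_mod_2_double by (simp add: field_simps)
  then show ?thesis
    by (cases "p < 2^r") (simp_all add: sum_lessThan_double)
qed

lemma haar_Suc_butterfly:
  "(haar (Suc r) (2*k) q + haar (Suc r) (2*k+1) q) / sqrt 2 = (if q < 2^r then haar r k q else 0)"
  "(haar (Suc r) (2*k) q - haar (Suc r) (2*k+1) q) / sqrt 2 =
     (if q < 2^r then 0 else if k = q - 2^r then 1 else 0)"
  unfolding haar_Suc div_mod_2_double by (simp_all add: field_simps)

lemma haar0_Suc_butterfly:
  "(haar0 (Suc r) (2*k) q + haar0 (Suc r) (2*k+1) q) / sqrt 2 =
     (if q < 2^r then haar0 r k q else if k = q - 2^r then 1 else 0)"
  "(haar0 (Suc r) (2*k) q - haar0 (Suc r) (2*k+1) q) / sqrt 2 = 0"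
  unfolding haar0_Suc div_mod_2_double by (simp_all add: field_simps)

lemma hadamard_transform_haar_Suc:
  assumes "q < 2^Suc r"
  shows "hadamard_transform (Suc r) (haar (Suc r)) p q =
    (if p < 2^r \<and> q < 2^r then hadamard_transform r (haar r) p q
     else if 2^r \<le> p \<and> 2^r \<le> q then hadamard r (q - 2^r) (p - 2^r) else 0)"
proof -
  have "q - 2^r < 2^r" if "2^r \<le> q" using assms that by simp
  then show ?thesis
    unfolding hadamard_transform_eq sum_hadamard_Suc haar_Suc_butterfly
    by (auto simp: if_distrib[of "times _"] cong: if_cong)
qed

lemma hadamard_transform_haar0_Suc:
  assumes "q < 2^Suc r"
  shows "hadamard_transform (Suc r) (haar0 (Suc r)) p q =
    (if p < 2^r \<and> q < 2^r then hadamard_transform r (haar0 r) p q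
     else if p < 2^r \<and> 2^r \<le> q then hadamard r (q - 2^r) p else 0)"
proof -
  have "q - 2^r < 2^r" if "2^r \<le> q" using assms that by simp
  then show ?thesis
    unfolding hadamard_transform_eq sum_hadamard_Suc haar0_Suc_butterfly
    by (auto simp: if_distrib[of "times _"] cong: if_cong)
qed

lemma abs_hadamard_transform_haar:
  "p < 2^r \<Longrightarrow> q < 2^r \<Longrightarrow> \<bar>hadamard_transform r (haar r) p q\<bar> =
     (if level p = level q then (1 / sqrt 2) ^ (level q - 1) else 0)"
proof (induction r arbitrary: p q)
  case 0
  then show ?case by (simp add: hadamard_transform_eq)
next
  case (Suc r)
  consider "p < 2^r" "q < 2^r" | "2^r \<le> p" "2^r \<le> q" | "p < 2^r \<longleftrightarrow> 2^r \<le> q"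
    by linarith
  then show ?case
  proof cases
    case 1
    then show ?thesis using Suc by (simp add: hadamard_transform_haar_Suc)
  next
    case 2
    then show ?thesis
      using Suc.prems by (simp add: hadamard_transform_haar_Suc level_eq_Suc abs_hadamard)
  next
    case 3
    then have "level p \<noteq> level q"
      using Suc.prems level_eq_Suc[of r p] level_eq_Suc[of r q] level_le_iff[of p r] level_le_iff[of q r]
      by (metis Suc_n_not_le_n not_le)
    then show ?thesis using 3 Suc.prems by (auto simp: hadamard_transform_haar_Suc)
  qed
qed

lemma abs_hadamard_transform_haar0:
  "p < 2^r \<Longrightarrow> q < 2^r \<Longrightarrow> \<bar>hadamard_transform r (haar0 r) p q\<bar> =
     (if p = 0 \<and> q = 0 \<or> level p < level q then (1 / sqrt 2) ^ (level q - 1) else 0)"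
proof (induction r arbitrary: p q)
  case 0
  then show ?case by (simp add: hadamard_transform_eq)
next
  case (Suc r)
  consider "p < 2^r" "q < 2^r" | "p < 2^r" "2^r \<le> q" | "2^r \<le> p"
    by linarith
  then show ?case
  proof cases
    case 1
    then show ?thesis using Suc by (simp add: hadamard_transform_haar0_Suc)
  next
    case 2
    then have "level p < level q" "0 < q"
      using Suc.prems level_eq_Suc[of r q] level_le_iff[of p r] by auto
    then show ?thesis
      using 2 Suc.prems by (simp add: hadamard_transform_haar0_Suc level_eq_Suc abs_hadamard)
  next
    case 3
    then have "\<not> level p < level q" "0 < p"
      using Suc.prems level_eq_Suc[of r p] level_le_iff[of q "Suc r"]
      by (simp_all add: not_less)
    then show ?thesis using 3 Suc.prems by (simp add: hadamard_transform_haar0_Suc)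
  qed
qed

subsection \<open>The columns of \<open>\<Psi>\<^sub>i\<^sub>d\<^sub>h\<^sub>w\<close>\<close>

lemma levels_width_Suc: "levels_width (Suc L) = levels_width L + 4^L"
  by (simp add: levels_width_def)

lemma levels_width_eq: "3 * levels_width r + 1 = 4^r"
  by (induction r) (simp_all add: levels_width_Suc levels_width_def[of 0])

lemma psi_block_eq:
  "psi_block U V r l i c =
     U (i div 2^r) (2^(l-1) + c div 2^(l-1)) * V (i mod 2^r) (2^(l-1) + c mod 2^(l-1))"
  by (simp add: psi_block_def kron_def dyadic_cols_def)

lemma psi_levels_column:
  "j < levels_width L \<Longrightarrow> \<exists>u v. 0 < u \<and> level u = level v \<and> level u \<le> L \<and>
     (\<forall>i. psi_levels U V r L i j = U (i div 2^r) u * V (i mod 2^r) v)"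
proof (induction L arbitrary: j)
  case 0
  then show ?case by (simp add: levels_width_def)
next
  case (Suc L)
  show ?case
  proof (cases "j < levels_width L")
    case True
    then show ?thesis using Suc.IH by (fastforce simp: hcat_def)
  next
    case False
    define c where "c = j - levels_width L"
    have "c < 2^L * 2^L"
      using Suc.prems False by (simp add: c_def levels_width_Suc flip: power_mult_distrib)
    then have "c div 2^L < 2^L" by (simp add: less_mult_imp_div_less)
    then have "level (2^L + c div 2^L) = Suc L" "level (2^L + c mod 2^L) = Suc L"
      by (simp_all add: level_eq_Suc)
    then show ?thesis
      using False by (intro exI[of _ "2^L + c div 2^L"] exI[of _ "2^L + c mod 2^L"])
        (simp add: hcat_def psi_block_eq c_def)
  qed
qed

lemma psi_levels_column_exists:
  "0 < u \<Longrightarrow> level u = level v \<Longrightarrow> level u \<le> L \<Longrightarrow> \<exists>j < levels_width L.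
     \<forall>i. psi_levels U V r L i j = U (i div 2^r) u * V (i mod 2^r) v"
proof (induction L)
  case 0
  then show ?case using level_pos_iff[of u] by simp
next
  case (Suc L)
  show ?case
  proof (cases "level u \<le> L")
    case True
    then obtain j where "j < levels_width L"
      "\<forall>i. psi_levels U V r L i j = U (i div 2^r) u * V (i mod 2^r) v"
      using Suc by blast
    then show ?thesis by (intro exI[of _ j]) (simp add: hcat_def levels_width_Suc)
  next
    case False
    then have "level u = Suc L" "level v = Suc L" using Suc.prems by auto
    then have "2^L \<le> u" "u < 2 * 2^L" "2^L \<le> v" "v < 2 * 2^L"
      using Suc.prems(1) level_bounds[of u] level_bounds[of v] level_pos_iff[of v] by auto
    then have u: "u - 2^L < 2^L" and v: "v - 2^L < 2^L" by auto
    define c where "c = (u - 2^L) * 2^L + (v - 2^L)"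
    have c_div_mod: "c div 2^L = u - 2^L" "c mod 2^L = v - 2^L"
      using v by (simp_all add: c_def)
    have "c < (u - 2^L) * 2^L + 2^L" using v by (simp add: c_def)
    also have "\<dots> = Suc (u - 2^L) * 2^L" by simp
    also have "\<dots> \<le> 2^L * 2^L" using u by (intro mult_right_mono) auto
    finally have "c < 4^L" by (simp flip: power_mult_distrib)
    then show ?thesis
      using c_div_mod \<open>2^L \<le> u\<close> \<open>2^L \<le> v\<close>
      by (intro exI[of _ "levels_width L + c"]) (simp add: hcat_def levels_width_Suc psi_block_eq)
  qed
qed

abbreviation idhw_factor_pairs :: "nat \<Rightarrow> (mat \<times> mat) set" where
  "idhw_factor_pairs r \<equiv> {(haar0 r, haar r), (haar r, haar0 r), (haar r, haar r)}"

lemma psi_idhw_block_column: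
  assumes "0 < j" "j < 4^r"
  obtains X Y k where "(X, Y) \<in> idhw_factor_pairs r" "k < levels_width r"
    "\<forall>i. psi_idhw r i j = psi_levels X Y r r i k"
proof -
  let ?w = "levels_width r"
  consider "j - 1 < ?w" | "?w \<le> j - 1" "j - 1 - ?w < ?w" | "?w \<le> j - 1 - ?w" "j - 1 - ?w - ?w < ?w"
    using assms levels_width_eq[of r] by linarith
  then show ?thesis
  proof cases
    case 1
    then show ?thesis using assms(1)
      by (intro that[of "haar0 r" "haar r" "j - 1"]) (simp_all add: psi_idhw_def hcat_def Let_def)
  next
    case 2
    then show ?thesis using assms(1)
      by (intro that[of "haar r" "haar0 r" "j - 1 - ?w"]) (simp_all add: psi_idhw_def hcat_def Let_def)
  next
    case 3
    then have "\<not> j - 1 < ?w" by linarith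
    then show ?thesis using 3 assms(1)
      by (intro that[of "haar r" "haar r" "j - 1 - ?w - ?w"]) (simp_all add: psi_idhw_def hcat_def Let_def)
  qed
qed

lemma psi_idhw_block_column_exists:
  assumes "(X, Y) \<in> idhw_factor_pairs r" "k < levels_width r"
  obtains j where "j < 4^r" "\<forall>i. psi_idhw r i j = psi_levels X Y r r i k"
proof -
  let ?w = "levels_width r"
  have "k + 1 < 4^r" "k + ?w + 1 < 4^r" "k + ?w + ?w + 1 < 4^r"
    using levels_width_eq[of r] assms(2) by linarith+
  consider "X = haar0 r" "Y = haar r" | "X = haar r" "Y = haar0 r" | "X = haar r" "Y = haar r"
    using assms(1) by blast
  then show ?thesis
  proof cases
    case 1
    then show ?thesis using \<open>k + 1 < 4^r\<close> assms(2)
      by (intro that[of "k + 1"]) (simp_all add: psi_idhw_def hcat_def Let_def)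
  next
    case 2
    then show ?thesis using \<open>k + ?w + 1 < 4^r\<close> assms(2)
      by (intro that[of "k + ?w + 1"]) (simp_all add: psi_idhw_def hcat_def Let_def)
  next
    case 3
    then show ?thesis using \<open>k + ?w + ?w + 1 < 4^r\<close> assms(2)
      by (intro that[of "k + ?w + ?w + 1"]) (simp_all add: psi_idhw_def hcat_def Let_def)
  qed
qed

definition idhw_kron_column :: "nat \<Rightarrow> mat \<Rightarrow> nat \<Rightarrow> mat \<Rightarrow> nat \<Rightarrow> nat \<Rightarrow> bool" where
  "idhw_kron_column r X u Y v j \<longleftrightarrow> (\<forall>i. psi_idhw r i j = X (i div 2^r) u * Y (i mod 2^r) v)"

lemma idhw_first_column: "idhw_kron_column r (haar r) 0 (haar r) 0 0"
proof -
  have "sqrt (real (4^r)) = 2^r"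
    by (simp add: real_sqrt_power flip: power_mult_distrib)
  then have "1 / sqrt (real (4^r)) = (1 / sqrt 2) ^ r * (1 / sqrt 2) ^ r"
    using inv_sqrt2_power_square[of r] by (simp add: power_one_over)
  then show ?thesis
    by (simp add: idhw_kron_column_def psi_idhw_def hcat_def haar_first_column Let_def)
qed

lemma idhw_column_cases:
  assumes "j < 4^r"
  obtains "idhw_kron_column r (haar r) 0 (haar r) 0 j"
  | X Y u v where "(X, Y) \<in> idhw_factor_pairs r" "0 < u" "level u = level v" "level u \<le> r"
      "idhw_kron_column r X u Y v j"
proof (cases "j = 0")
  case True
  then show ?thesis using idhw_first_column that(1) by simp
next
  case False
  then obtain X Y k where XY: "(X, Y) \<in> idhw_factor_pairs r" and "k < levels_width r"
    and block: "\<forall>i. psi_idhw r i j = psi_levels X Y r r i k"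
    using psi_idhw_block_column assms by blast
  then obtain u v where "0 < u" "level u = level v" "level u \<le> r"
    and "\<forall>i. psi_levels X Y r r i k = X (i div 2^r) u * Y (i mod 2^r) v"
    using psi_levels_column by blast
  then show ?thesis
    using that(2)[OF XY] block by (simp add: idhw_kron_column_def)
qed

lemma idhw_column_exists:
  assumes "(X, Y) \<in> idhw_factor_pairs r" "0 < u" "level u = level v" "level u \<le> r"
  obtains j where "j < 4^r" "idhw_kron_column r X u Y v j"
proof -
  obtain k where k: "k < levels_width r"
    and "\<forall>i. psi_levels X Y r r i k = X (i div 2^r) u * Y (i mod 2^r) v"
    using psi_levels_column_exists assms(2-4) by blast
  moreover obtain j where "j < 4^r" "\<forall>i. psi_idhw r i j = psi_levels X Y r r i k"
    using psi_idhw_block_column_exists[OF assms(1) k] .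
  ultimately show ?thesis using that by (simp add: idhw_kron_column_def)
qed

subsection \<open>Entries of B\<close>

lemma Bmat_idhw_kron_column:
  assumes "idhw_kron_column r X u Y v j" and "px < 2^r"
  shows "Bmat r (2^r * py + px) j = hadamard_transform r X py u * hadamard_transform r Y px v"
proof -
  let ?row = "2^r * py + px"
  have "Bmat r ?row j = (\<Sum>k<2^r * 2^r. (hadamard r (k div 2^r) py * X (k div 2^r) u) *
       (hadamard r (k mod 2^r) px * Y (k mod 2^r) v))"
    using assms unfolding Bmat_def mmult_def mtranspose_def kron_def idhw_kron_column_def
    by (simp add: algebra_simps flip: power_mult_distrib)
  also have "\<dots> = (\<Sum>a<2^r. \<Sum>b<2^r. (hadamard r a py * X a u) * (hadamard r b px * Y b v))"
    by (rule sum_lessThan_mult_div_mod)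
  finally show ?thesis
    by (simp add: hadamard_transform_eq sum_product)
qed

lemma abs_Bmat_le:
  assumes py: "py < 2^r" and px: "px < 2^r" and "j < 4^r"
  shows "\<bar>Bmat r (2^r * py + px) j\<bar> \<le> (1 / 2) ^ (level (max py px) - 1)"
  using \<open>j < 4^r\<close>
proof (cases rule: idhw_column_cases)
  case 1
  then show ?thesis
    using Bmat_idhw_kron_column[OF 1 px] abs_hadamard_transform_haar[OF py, of 0]
      abs_hadamard_transform_haar[OF px, of 0]
    by (auto simp: abs_mult level_max)
next
  case (2 X Y u v)
  have "u < 2^r" "v < 2^r" using 2(3,4) level_le_iff by metis+
  moreover have "0 < v" using 2(2,3) level_pos_iff by metis
  ultimately show ?thesis
    using 2 Bmat_idhw_kron_column[OF 2(5) px] inv_sqrt2_power_square[of "level u - 1"]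
      abs_hadamard_transform_haar[OF py] abs_hadamard_transform_haar[OF px]
      abs_hadamard_transform_haar0[OF py] abs_hadamard_transform_haar0[OF px]
    by (auto simp: abs_mult level_max)
qed

lemma abs_Bmat_attains:
  assumes py: "py < 2^r" and px: "px < 2^r"
  obtains j where "j < 4^r" "\<bar>Bmat r (2^r * py + px) j\<bar> = (1 / 2) ^ (level (max py px) - 1)"
proof (cases "py = 0 \<and> px = 0")
  case True
  then have "py = 0" "px = 0" by auto
  then show ?thesis
    using that[of 0] Bmat_idhw_kron_column[OF idhw_first_column px, of py]
      abs_hadamard_transform_haar[OF py, of 0] abs_hadamard_transform_haar[OF px, of 0]
    by (simp add: abs_mult)
next
  case False
  define m where "m = level (max py px)"
  have "0 < m"
    using False level_pos_iff[of "max py px"] by (auto simp: m_def)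
  have "m \<le> r"
    using py px level_le_iff[of "max py px" r] by (simp add: m_def)
  let ?c = "(1 / sqrt 2) ^ (m - 1)"
  have "\<exists>X Y u v. (X, Y) \<in> idhw_factor_pairs r \<and> 0 < u \<and> level u = m \<and> level v = m \<and>
      \<bar>hadamard_transform r X py u\<bar> = ?c \<and> \<bar>hadamard_transform r Y px v\<bar> = ?c"
  proof (cases "level py" "level px" rule: linorder_cases)
    case less
    then have "level px = m" by (simp add: m_def level_max)
    then show ?thesis using less \<open>0 < m\<close> py px level_pos_iff[of px]
      by (intro exI[of _ "haar0 r"] exI[of _ "haar r"] exI[of _ px] exI[of _ px])
        (simp add: abs_hadamard_transform_haar abs_hadamard_transform_haar0)
  next
    case equal
    then have "level py = m" "level px = m" by (simp_all add: m_def level_max)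
    then show ?thesis using \<open>0 < m\<close> py px level_pos_iff[of py]
      by (intro exI[of _ "haar r"] exI[of _ "haar r"] exI[of _ py] exI[of _ px])
        (simp add: abs_hadamard_transform_haar)
  next
    case greater
    then have "level py = m" by (simp add: m_def level_max)
    then show ?thesis using greater \<open>0 < m\<close> py px level_pos_iff[of py]
      by (intro exI[of _ "haar r"] exI[of _ "haar0 r"] exI[of _ py] exI[of _ py])
        (simp add: abs_hadamard_transform_haar abs_hadamard_transform_haar0)
  qed
  then obtain X Y u v where XY: "(X, Y) \<in> idhw_factor_pairs r" "0 < u" "level u = m" "level v = m"
    and coeffs: "\<bar>hadamard_transform r X py u\<bar> = ?c" "\<bar>hadamard_transform r Y px v\<bar> = ?c"
    by blast
  obtain j where "j < 4^r" "idhw_kron_column r X u Y v j"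
    using idhw_column_exists[OF XY(1,2)] XY(3,4) \<open>m \<le> r\<close> by metis
  then show ?thesis
    using that[of j] Bmat_idhw_kron_column[OF _ px] coeffs inv_sqrt2_power_square[of "m - 1"]
    by (simp add: abs_mult m_def)
qed

lemma local_coherence_eq:
  assumes "py < 2^r" and "px < 2^r"
  shows "local_coherence r (2^r * py + px + 1) = (1 / 2) ^ (level (max py px) - 1)"
proof -
  let ?row = "\<lambda>j. \<bar>Bmat r (2^r * py + px) j\<bar>"
  have "{\<bar>Bmat r (2^r * py + px + 1 - 1) j\<bar> | j. j < 4^r} = ?row ` {..<4^r}"
    by auto
  moreover obtain j where "j < 4^r" "?row j = (1 / 2) ^ (level (max py px) - 1)"
    using abs_Bmat_attains[OF assms] .
  ultimately show ?thesis
    unfolding local_coherence_def using abs_Bmat_le[OF assms]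
    by (intro Max_eqI) (auto intro: image_eqI[where x = j])
qed

subsection \<open>The coherence bound \<open>\<kappa>\<close>\<close>

lemma kappa_xy_eq: "kappa_xy (px + 1) (py + 1) = (1 / 2) ^ (level (max px py) - 1)"
proof (cases "max px py = 0")
  case True
  then show ?thesis by (simp add: kappa_xy_def)
next
  case False
  let ?k = "level (max px py) - 1"
  have "\<lfloor>log 2 (real (max px py))\<rfloor> = int ?k"
    using False by (intro floor_log2_eq_level) auto
  moreover have "2 powr (- real ?k) = (1 / 2 :: real) ^ ?k"
    by (simp add: powr_minus powr_realpow power_one_over inverse_eq_divide)
  moreover have "(1 / 2 :: real) ^ ?k \<le> 1"
    by (simp add: power_le_one)
  moreover have "max (px + 1) (py + 1) \<noteq> 1" "real (max (px + 1) (py + 1)) - 1 = real (max px py)"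
    using False by (auto simp: max_def)
  ultimately show ?thesis by (simp add: kappa_xy_def)
qed

lemma sum_square_lessThan_double:
  fixes f :: "nat \<Rightarrow> nat \<Rightarrow> real"
  shows "(\<Sum>a<2 * n. \<Sum>b<2 * n. f a b) =
    (\<Sum>a<n. \<Sum>b<n. f a b) + (\<Sum>a<n. \<Sum>b\<in>{n..<2 * n}. f a b) + (\<Sum>a\<in>{n..<2 * n}. \<Sum>b<2 * n. f a b)"
proof -
  have split: "(\<Sum>a<2 * n. g a) = (\<Sum>a<n. g a) + (\<Sum>a\<in>{n..<2 * n}. g a)" for g :: "nat \<Rightarrow> real"
    using sum.atLeastLessThan_concat[of 0 n "2 * n" g] by (simp add: atLeast0LessThan)
  show ?thesis by (simp add: split sum.distrib)
qed

text \<open>Passing from \<open>2\<^sup>r\<close> to \<open>2\<^sup>r\<^sup>+\<^sup>1\<close> adds the \<open>3 \<cdot> 4\<^sup>r\<close> index pairs of level r + 1,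
  each contributing \<open>4\<^sup>-\<^sup>r\<close>.\<close>

lemma sum_level_max_quarter_power:
  "(\<Sum>a<2^r. \<Sum>b<2^r. (1 / 4 :: real) ^ (level (max a b) - 1)) = 1 + 3 * real r"
proof (induction r)
  case 0
  then show ?case by simp
next
  case (Suc r)
  let ?n = "2^r :: nat"
  let ?f = "\<lambda>a b. (1 / 4 :: real) ^ (level (max a b) - 1)"
  have top: "?f a b = (1 / 4) ^ r" if "a < 2 * ?n" "b < 2 * ?n" "?n \<le> max a b" for a b
    using that level_eq_Suc[of r "max a b"] by simp
  have "real ?n * real ?n * (1 / 4) ^ r = 1"
    by (simp add: power_one_over flip: power_mult_distrib)
  moreover have "(\<Sum>a<?n. \<Sum>b\<in>{?n..<2 * ?n}. ?f a b) = (\<Sum>a<?n. \<Sum>b\<in>{?n..<2 * ?n}. (1 / 4) ^ r)"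
    by (intro sum.cong refl top) auto
  moreover have "(\<Sum>a\<in>{?n..<2 * ?n}. \<Sum>b<2 * ?n. ?f a b) = (\<Sum>a\<in>{?n..<2 * ?n}. \<Sum>b<2 * ?n. (1 / 4) ^ r)"
    by (intro sum.cong refl top) auto
  ultimately show ?case
    using Suc.IH sum_square_lessThan_double[of ?f ?n] by (simp add: algebra_simps)
qed

lemma sum_kappa_p_square: "(\<Sum>lp=1..(2^r)^2. (kappa_p (2^r) lp)^2) = 1 + 3 * real r"
proof -
  let ?f = "\<lambda>a b. (1 / 4 :: real) ^ (level (max a b) - 1)"
  have "(kappa_p (2^r) (Suc k))^2 = ?f (k div 2^r) (k mod 2^r)" for k
    using kappa_xy_eq[of "k mod 2^r" "k div 2^r"]
    by (simp add: kappa_p_def max.commute power2_eq_square flip: power_mult_distrib)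
  then have "(\<Sum>lp=1..(2^r)^2. (kappa_p (2^r) lp)^2) = (\<Sum>k<2^r * 2^r. ?f (k div 2^r) (k mod 2^r))"
    by (simp add: sum.atLeast1_atMost_eq power2_eq_square)
  also have "\<dots> = (\<Sum>a<2^r. \<Sum>b<2^r. ?f a b)"
    by (rule sum_lessThan_mult_div_mod)
  finally show ?thesis using sum_level_max_quarter_power by simp
qed

theorem mainTheorem2:
  fixes r Nbar Np :: nat
  assumes "r \<ge> 1" and "Nbar = 2^r" and "Np = Nbar^2"
  shows "(\<forall>lx\<in>{1..Nbar}. \<forall>ly\<in>{1..Nbar}.
            local_coherence r (Nbar * (ly - 1) + lx) = kappa_p Nbar (Nbar * (ly - 1) + lx)
            \<and> kappa_p Nbar (Nbar * (ly - 1) + lx) = kappa_xy lx ly)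
         \<and> (\<Sum>lp=1..Np. (kappa_p Nbar lp)^2) = 1 + 3 * log 2 (real Nbar)"
proof
  show "\<forall>lx\<in>{1..Nbar}. \<forall>ly\<in>{1..Nbar}.
      local_coherence r (Nbar * (ly - 1) + lx) = kappa_p Nbar (Nbar * (ly - 1) + lx)
      \<and> kappa_p Nbar (Nbar * (ly - 1) + lx) = kappa_xy lx ly"
  proof (intro ballI)
    fix lx ly assume "lx \<in> {1..Nbar}" "ly \<in> {1..Nbar}"
    moreover define px py where "px = lx - 1" and "py = ly - 1"
    ultimately have "px < 2^r" "py < 2^r" "lx = px + 1" "ly = py + 1"
      using assms(2) by auto
    then show "local_coherence r (Nbar * (ly - 1) + lx) = kappa_p Nbar (Nbar * (ly - 1) + lx)
        \<and> kappa_p Nbar (Nbar * (ly - 1) + lx) = kappa_xy lx ly"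
      using assms(2) local_coherence_eq[of py r px] kappa_xy_eq[of px py]
      by (simp add: kappa_p_def max.commute add.assoc)
  qed
next
  show "(\<Sum>lp=1..Np. (kappa_p Nbar lp)^2) = 1 + 3 * log 2 (real Nbar)"
    using sum_kappa_p_square[of r] assms(2,3) by simp
qed

end
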